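(* Let $G=(\mathcal V,E)$ be a simple, connected, undirected graph with vertex set $\mathcal V=\{1,\dots,N\}$ and nonnegative edge weights $w_{ij}=w_{ji}$ ($w_{ii}=0$), degree matrix $\mathbf D=\mathrm{diag}(d_1,\dots,d_N)$ with $d_i=\sum_j w_{ij}$, adjacency matrix $\mathbf W=(w_{ij})$, and symmetric normalized Laplacian $\boldsymbol{\mathcal L}=\mathbf D^{-1/2}(\mathbf D-\mathbf W)\mathbf D^{-1/2}$. Fix an orthonormal eigenbasis $\mathbf u_1,\dots,\mathbf u_N$ of $\boldsymbol{\mathcal L}$ with eigenvalues $0=\lambda_1\le\dots\le\lambda_N$, and let $\mathbf U$ be the matrix with columns $\mathbf u_i$. For a signal $\phi\in\mathbb R^N$, $\phi\neq 0$, let its bandwidth be $\omega(\phi)=\max\{\lambda_i : \langle \phi,\mathbf u_i\rangle\neq 0\}$. For a nonempty subset $\mathcal S\subseteq\mathcal V$, define the cut-off frequency $\omega_c(\mathcal S)=\inf\{\omega(\phi): \phi\in\mathbb R^N\setminus\{0\},\ \phi(i)=0\ \forall i\in\mathcal S\}$ (with $\inf\emptyset=+\infty$), and let $\mathcal K=\{i:\lambda_i<\omega_c(\mathcal S)\}$. For $\theta\in\mathbb R$, let $\mathcal P_\theta=\sum_{i:\lambda_i<\theta}\mathbf u_i\mathbf u_i^T$ be the orthogonal projection onto the span of eigenvectors with eigenvalue less than $\theta$. Let $\mathbf f\in\mathbb R^N$ and $\delta>0$, and define the smoothness $\gamma(\mathbf f)=\min\{\theta : \|\mathbf f-\mathcal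 P_\theta\mathbf f\|\le\delta\}$. Let $p$ be the number of eigenvalues $\lambda_i$ of $\boldsymbol{\mathcal L}$ with $\lambda_i<\gamma(\mathbf f)$. For a sampling set $\mathcal S$, let $\hat{\mathbf f}=\mathbf U_{\mathcal V,\mathcal K}\boldsymbol\alpha^*$ where $\boldsymbol\alpha^*=\arg\min_{\boldsymbol\alpha}\|\mathbf U_{\mathcal S,\mathcal K}\boldsymbol\alpha-\mathbf f(\mathcal S)\|$ (here $\mathbf U_{A,B}$ is the submatrix of $\mathbf U$ with rows in $A$ and columns in $B$, and $\mathbf f(\mathcal S)$ is the restriction of $\mathbf f$ to $\mathcal S$), the least-squares problem being required to have a unique solution. Then every sampling set $\mathcal S$ whose reconstruction satisfies $\|\mathbf f-\hat{\mathbf f}\|\le\delta$ has $|\mathcal S|\ge p$; i.e., the minimum number of labels $l$ needed to achieve $\|\mathbf f-\hat{\mathbf f}\|\le\delta$ satisfies $l\ge p$.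
   Context: A graph signal is a vector $\mathbf f\in\mathbb R^N$ indexed by the vertices; its Graph Fourier Transform is $\mathbf U^T\mathbf f$, and eigenvalues of $\boldsymbol{\mathcal L}$ play the role of frequencies. Sampling $\mathbf f$ on $\mathcal S$ (labeling the nodes in $\mathcal S$) means retaining $\mathbf f(\mathcal S)$, and $\hat{\mathbf f}$ is the bandlimited reconstruction of $\mathbf f$ from these samples using the eigenvectors with eigenvalue below the cut-off frequency of $\mathcal S$. *)

theory Defs
  imports "HOL-Analysis.Analysis"
begin

text \<open>Eigenvectors u k (k in V) with u k j the j-th entry, i.e. U j k = u k j; eigenvalues lam k.\<close>

definition verts :: "nat \<Rightarrow> nat set" where
  "verts N = {1..N}"

definition graph_connected :: "nat \<Rightarrow> (nat \<Rightarrow> nat \<Rightarrow> real) \<Rightarrow> bool" where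
  "graph_connected N w \<longleftrightarrow>
     (\<forall>i\<in>verts N. \<forall>j\<in>verts N.
        (i, j) \<in> ({(a, b). a \<in> verts N \<and> b \<in> verts N \<and> w a b > 0})\<^sup>*)"

definition degree :: "nat \<Rightarrow> (nat \<Rightarrow> nat \<Rightarrow> real) \<Rightarrow> nat \<Rightarrow> real" where
  "degree N w i = (\<Sum>j\<in>verts N. w i j)"

definition norm_laplacian :: "nat \<Rightarrow> (nat \<Rightarrow> nat \<Rightarrow> real) \<Rightarrow> nat \<Rightarrow> nat \<Rightarrow> real" where
  "norm_laplacian N w i j =
     inverse (sqrt (degree N w i)) * ((if i = j then degree N w i else 0) - w i j)
       * inverse (sqrt (degree N w j))"

definition vinner :: "nat \<Rightarrow> (nat \<Rightarrow> real) \<Rightarrow> (nat \<Rightarrow> real) \<Rightarrow> real" where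
  "vinner N x y = (\<Sum>j\<in>verts N. x j * y j)"

definition vnorm :: "nat \<Rightarrow> (nat \<Rightarrow> real) \<Rightarrow> real" where
  "vnorm N x = sqrt (vinner N x x)"

definition bandwidth :: "nat \<Rightarrow> (nat \<Rightarrow> nat \<Rightarrow> real) \<Rightarrow> (nat \<Rightarrow> real) \<Rightarrow> (nat \<Rightarrow> real) \<Rightarrow> real" where
  "bandwidth N u lam phi = Max {lam i | i. i \<in> verts N \<and> vinner N phi (u i) \<noteq> 0}"

text \<open>Cut-off frequency (with Inf of the empty set = +infinity, hence ereal).\<close>
definition cutoff_freq :: "nat \<Rightarrow> (nat \<Rightarrow> nat \<Rightarrow> real) \<Rightarrow> (nat \<Rightarrow> real) \<Rightarrow> nat set \<Rightarrow> ereal" where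
  "cutoff_freq N u lam S =
     Inf {ereal (bandwidth N u lam phi) | phi.
            (\<exists>j\<in>verts N. phi j \<noteq> 0) \<and> (\<forall>i\<in>S. phi i = 0)}"

definition K_set :: "nat \<Rightarrow> (nat \<Rightarrow> nat \<Rightarrow> real) \<Rightarrow> (nat \<Rightarrow> real) \<Rightarrow> nat set \<Rightarrow> nat set" where
  "K_set N u lam S = {i \<in> verts N. ereal (lam i) < cutoff_freq N u lam S}"

definition proj :: "nat \<Rightarrow> (nat \<Rightarrow> nat \<Rightarrow> real) \<Rightarrow> (nat \<Rightarrow> real) \<Rightarrow> real \<Rightarrow> (nat \<Rightarrow> real) \<Rightarrow> nat \<Rightarrow> real" where
  "proj N u lam theta f = (\<lambda>j. \<Sum>i\<in>{i \<in> verts N. lam i < theta}. vinner N f (u i) * u i j)"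

text \<open>Smoothness gamma(f): the "min" of the paper, taken as an infimum in the extended reals.\<close>
definition smoothness :: "nat \<Rightarrow> (nat \<Rightarrow> nat \<Rightarrow> real) \<Rightarrow> (nat \<Rightarrow> real) \<Rightarrow> real \<Rightarrow> (nat \<Rightarrow> real) \<Rightarrow> ereal" where
  "smoothness N u lam delta f =
     Inf {ereal theta | theta. vnorm N (\<lambda>j. f j - proj N u lam theta f j) \<le> delta}"

text \<open>Least-squares residual || U_{S,K} alpha - f(S) ||, alpha a vector indexed by K
  (represented as a function vanishing outside K).\<close>
definition ls_residual :: "(nat \<Rightarrow> nat \<Rightarrow> real) \<Rightarrow> nat set \<Rightarrow> nat set \<Rightarrow> (nat \<Rightarrow> real) \<Rightarrow> (nat \<Rightarrow> real) \<Rightarrow> real" where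
  "ls_residual u K S f alpha = sqrt (\<Sum>s\<in>S. ((\<Sum>k\<in>K. u k s * alpha k) - f s)\<^sup>2)"

definition is_ls_solution :: "(nat \<Rightarrow> nat \<Rightarrow> real) \<Rightarrow> nat set \<Rightarrow> nat set \<Rightarrow> (nat \<Rightarrow> real) \<Rightarrow> (nat \<Rightarrow> real) \<Rightarrow> bool" where
  "is_ls_solution u K S f alpha \<longleftrightarrow>
     (\<forall>i. i \<notin> K \<longrightarrow> alpha i = 0) \<and>
     (\<forall>beta. (\<forall>i. i \<notin> K \<longrightarrow> beta i = 0) \<longrightarrow> ls_residual u K S f alpha \<le> ls_residual u K S f beta)"

definition reconstruction :: "(nat \<Rightarrow> nat \<Rightarrow> real) \<Rightarrow> nat set \<Rightarrow> (nat \<Rightarrow> real) \<Rightarrow> nat \<Rightarrow> real" where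
  "reconstruction u K alpha = (\<lambda>j. \<Sum>k\<in>K. u k j * alpha k)"

end

theory Submission
  imports Defs
begin

text \<open>Uniqueness forces the columns of \<open>U\<^sub>S\<^sub>,\<^sub>K\<close> to be independent, so
  \<open>|K| \<le> |S|\<close>. The set \<open>K\<close> is cut out by a real threshold \<open>\<theta>\<close>, so the reconstruction
  lies in the range of \<open>P\<^sub>\<theta>\<close>; since \<open>P\<^sub>\<theta> f\<close> is the best approximation of \<open>f\<close> from that
  range, \<open>\<parallel>f - P\<^sub>\<theta> f\<parallel>\<close> is at most the reconstruction error \<open>\<le> \<delta>\<close>, whence \<open>\<gamma>(f) \<le> \<theta>\<close> and every eigenvalue below
  \<open>\<gamma>(f)\<close> has its index in \<open>K\<close>.\<close>

lemma homogeneous_system_nontrivial_solution: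
  fixes a :: "'s \<Rightarrow> 'k \<Rightarrow> 'a::field"
  assumes "finite S" "finite K" "card S < card K"
  shows "\<exists>b. (\<forall>k. k \<notin> K \<longrightarrow> b k = 0) \<and> (\<exists>k\<in>K. b k \<noteq> 0)
           \<and> (\<forall>s\<in>S. (\<Sum>k\<in>K. a s k * b k) = 0)"
  using assms
proof (induction S arbitrary: K a rule: finite_induct)
  case empty
  then obtain k0 where "k0 \<in> K" by fastforce
  then show ?case by (intro exI[of _ "\<lambda>k. if k = k0 then 1 else 0"]) auto
next
  case (insert s S)
  show ?case
  proof (cases "\<forall>k\<in>K. a s k = 0")
    case True
    have "card S < card K" using insert.prems insert.hyps by simp
    with True show ?thesis using insert.IH[OF insert.prems(1)] by auto
  next
    case False
    then obtain k0 where k0: "k0 \<in> K" "a s k0 \<noteq> 0" by blast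
    define K' where "K' = K - {k0}"
    have K: "K = insert k0 K'" "k0 \<notin> K'" "finite K'"
      using k0 insert.prems unfolding K'_def by auto
    txt \<open>Eliminate the unknown \<open>k0\<close> using equation \<open>s\<close>, then solve the remaining system.\<close>
    define a' where "a' s' k = a s' k - a s' k0 * a s k / a s k0" for s' k
    obtain b' where b': "\<forall>k. k \<notin> K' \<longrightarrow> b' k = 0" "\<exists>k\<in>K'. b' k \<noteq> 0"
        "\<forall>s'\<in>S. (\<Sum>k\<in>K'. a' s' k * b' k) = 0"
    proof -
      have "card S < card K'" using insert.prems insert.hyps K by simp
      then show ?thesis using insert.IH[OF K(3), of a'] that by blast
    qed
    define c where "c = - (\<Sum>k\<in>K'. a s k * b' k) / a s k0"
    define b where "b = b'(k0 := c)"
    have sum_b: "(\<Sum>k\<in>K. a t k * b k) = a t k0 * c + (\<Sum>k\<in>K'. a t k * b' k)" for t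
    proof -
      have "(\<Sum>k\<in>K'. a t k * b k) = (\<Sum>k\<in>K'. a t k * b' k)"
        using K(2) unfolding b_def by (intro sum.cong) auto
      then show ?thesis using K unfolding b_def by simp
    qed
    have "(\<Sum>k\<in>K. a s' k * b k) = 0" if "s' \<in> S" for s'
    proof -
      have "0 = (\<Sum>k\<in>K'. a s' k * b' k) - a s' k0 / a s k0 * (\<Sum>k\<in>K'. a s k * b' k)"
        using b'(3) that unfolding a'_def
        by (simp add: sum_distrib_left sum_subtractf algebra_simps)
      also have "\<dots> = (\<Sum>k\<in>K. a s' k * b k)"
        unfolding sum_b c_def by (simp add: field_simps)
      finally show ?thesis by simp
    qed
    moreover have "(\<Sum>k\<in>K. a s k * b k) = 0"
      unfolding sum_b c_def using k0 by simp
    moreover have "\<forall>k. k \<notin> K \<longrightarrow> b k = 0" "\<exists>k\<in>K. b k \<noteq> 0"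
      using b'(1,2) K unfolding b_def by auto
    ultimately show ?thesis by (intro exI[of _ b]) auto
  qed
qed

lemma card_le_if_unique_ls_solution:
  assumes "finite S" "finite K"
    and "is_ls_solution u K S f alpha"
    and unique: "\<forall>beta. is_ls_solution u K S f beta \<longrightarrow> beta = alpha"
  shows "card K \<le> card S"
proof (rule ccontr)
  assume "\<not> card K \<le> card S"
  then obtain b where b: "\<forall>k. k \<notin> K \<longrightarrow> b k = 0" "\<exists>k\<in>K. b k \<noteq> 0"
      "\<forall>s\<in>S. (\<Sum>k\<in>K. u k s * b k) = 0"
    using homogeneous_system_nontrivial_solution[of S K "\<lambda>s k. u k s"] assms(1,2) by auto
  define beta where "beta k = alpha k + b k" for k
  have "(\<Sum>k\<in>K. u k s * beta k) = (\<Sum>k\<in>K. u k s * alpha k)" if "s \<in> S" for s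
    using b(3) that unfolding beta_def by (simp add: distrib_left sum.distrib)
  then have "ls_residual u K S f beta = ls_residual u K S f alpha"
    unfolding ls_residual_def by (intro arg_cong[where f = sqrt] sum.cong) auto
  then have "is_ls_solution u K S f beta"
    using assms(3) b(1) unfolding is_ls_solution_def beta_def by simp
  then have "beta = alpha" using unique by blast
  then show False using b(2) unfolding beta_def by (metis add_cancel_left_right)
qed

lemma ereal_threshold_real:
  fixes g :: "'a \<Rightarrow> real" and c :: ereal
  assumes "finite V"
  obtains theta where "{i \<in> V. ereal (g i) < c} = {i \<in> V. g i < theta}"
proof (cases c)
  case (real r)
  then show ?thesis using that[of r] by simp
next
  case PInf
  have "g i \<le> Max (insert 0 (g ` V))" if "i \<in> V" for i
    using assms that by (intro Max_ge) auto
  then have "g i < Max (insert 0 (g ` V)) + 1" if "i \<in> V" for i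
    using that by fastforce
  then show ?thesis using that PInf by auto
next
  case MInf
  have "Min (insert 0 (g ` V)) \<le> g i" if "i \<in> V" for i
    using assms that by (intro Min_le) auto
  then have "\<not> g i < Min (insert 0 (g ` V)) - 1" if "i \<in> V" for i
    using that by fastforce
  then show ?thesis using that MInf by auto
qed

lemma vinner_commute: "vinner N x y = vinner N y x"
  unfolding vinner_def by (simp add: mult.commute)

lemma vinner_sum_left:
  "vinner N (\<lambda>j. \<Sum>i\<in>T. c i * v i j) y = (\<Sum>i\<in>T. c i * vinner N (v i) y)"
  unfolding vinner_def by (simp add: sum_distrib_right sum_distrib_left mult.assoc) (rule sum.swap)

lemma vinner_diff_left: "vinner N (\<lambda>j. x j - y j) z = vinner N x z - vinner N y z"
  unfolding vinner_def by (simp add: sum_subtractf left_diff_distrib)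

lemma vinner_add_left: "vinner N (\<lambda>j. x j + y j) z = vinner N x z + vinner N y z"
  unfolding vinner_def by (simp add: sum.distrib distrib_right)

lemma vinner_self_nonneg: "vinner N x x \<ge> 0"
  unfolding vinner_def by (intro sum_nonneg) simp

lemma vnorm_le_vnorm_add_orthogonal:
  assumes "vinner N x y = 0"
  shows "vnorm N x \<le> vnorm N (\<lambda>j. x j + y j)"
proof -
  have "vinner N (\<lambda>j. x j + y j) (\<lambda>j. x j + y j) = vinner N x x + vinner N y y"
    using assms
    by (simp add: vinner_add_left vinner_commute[of N _ "\<lambda>j. x j + y j"] vinner_commute[of N y x])
  then show ?thesis unfolding vnorm_def using vinner_self_nonneg[of N y] by simp
qed

lemma proj_best_approximation:
  assumes orthonormal: "\<forall>k\<in>verts N. \<forall>l\<in>verts N. vinner N (u k) (u l) = (if k = l then 1 else 0)"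
  shows "vnorm N (\<lambda>j. f j - proj N u lam theta f j)
           \<le> vnorm N (\<lambda>j. f j - (\<Sum>k\<in>{i \<in> verts N. lam i < theta}. u k j * alpha k))"
proof -
  define T where "T = {i \<in> verts N. lam i < theta}"
  have T: "finite T" "T \<subseteq> verts N" unfolding T_def verts_def by auto
  define c where "c i = vinner N f (u i)" for i
  define e where "e = (\<lambda>j. f j - proj N u lam theta f j)"
  define d where "d j = (\<Sum>i\<in>T. (c i - alpha i) * u i j)" for j
  have "vinner N e (u i) = 0" if "i \<in> T" for i
  proof -
    have "vinner N (proj N u lam theta f) (u i) = (\<Sum>k\<in>T. c k * vinner N (u k) (u i))"
      unfolding proj_def T_def[symmetric] c_def[symmetric] by (rule vinner_sum_left)
    also have "\<dots> = (\<Sum>k\<in>T. if k = i then c k else 0)"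
      using orthonormal that T(2) by (intro sum.cong) (auto simp: subset_iff)
    also have "\<dots> = c i" using T(1) that by simp
    finally show ?thesis unfolding e_def vinner_diff_left c_def by simp
  qed
  then have "vinner N e d = 0"
    unfolding d_def vinner_commute[of N e] vinner_sum_left by simp
  then have "vnorm N e \<le> vnorm N (\<lambda>j. e j + d j)"
    by (rule vnorm_le_vnorm_add_orthogonal)
  moreover have "(\<lambda>j. f j - (\<Sum>k\<in>T. u k j * alpha k)) = (\<lambda>j. e j + d j)"
    unfolding e_def d_def proj_def T_def[symmetric] c_def[symmetric]
    by (simp add: algebra_simps sum_subtractf)
  ultimately show ?thesis unfolding T_def[symmetric] e_def by simp
qed

theorem theorem2:
  fixes N :: nat and w :: "nat \<Rightarrow> nat \<Rightarrow> real"
    and u :: "nat \<Rightarrow> nat \<Rightarrow> real" and lam :: "nat \<Rightarrow> real"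
    and f :: "nat \<Rightarrow> real" and delta :: real
    and S :: "nat set" and alpha :: "nat \<Rightarrow> real"
  assumes w_nonneg: "\<forall>i\<in>verts N. \<forall>j\<in>verts N. w i j \<ge> 0"
    and w_sym: "\<forall>i\<in>verts N. \<forall>j\<in>verts N. w i j = w j i"
    and w_diag: "\<forall>i\<in>verts N. w i i = 0"
    and conn: "graph_connected N w"
    and orthonormal: "\<forall>k\<in>verts N. \<forall>l\<in>verts N. vinner N (u k) (u l) = (if k = l then 1 else 0)"
    and eigen: "\<forall>k\<in>verts N. \<forall>i\<in>verts N.
                  (\<Sum>j\<in>verts N. norm_laplacian N w i j * u k j) = lam k * u k i"
    and lam_first: "N \<ge> 1 \<longrightarrow> lam 1 = 0"
    and lam_sorted: "\<forall>k\<in>verts N. \<forall>l\<in>verts N. k \<le> l \<longrightarrow> lam k \<le> lam l"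
    and delta_pos: "delta > 0"
    and S_sub: "S \<subseteq> verts N" and S_ne: "S \<noteq> {}"
    and ls: "is_ls_solution u (K_set N u lam S) S f alpha"
    and ls_unique: "\<forall>beta. is_ls_solution u (K_set N u lam S) S f beta \<longrightarrow> beta = alpha"
    and err: "vnorm N (\<lambda>j. f j - reconstruction u (K_set N u lam S) alpha j) \<le> delta"
  shows "card S \<ge> card {i \<in> verts N. ereal (lam i) < smoothness N u lam delta f}"
proof -
  define K where "K = K_set N u lam S"
  have fin: "finite (verts N)" "finite K" "finite S"
    using S_sub unfolding K_def K_set_def verts_def by (auto intro: finite_subset)
  obtain theta where K_theta: "K = {i \<in> verts N. lam i < theta}"
    using ereal_threshold_real[OF fin(1)] unfolding K_def K_set_def by metis
  have "vnorm N (\<lambda>j. f j - proj N u lam theta f j) \<le> delta"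
    using proj_best_approximation[OF orthonormal, of f lam theta alpha] err
    unfolding reconstruction_def K_def[symmetric] K_theta by simp
  then have "smoothness N u lam delta f \<le> ereal theta"
    unfolding smoothness_def by (intro Inf_lower) auto
  then have "{i \<in> verts N. ereal (lam i) < smoothness N u lam delta f} \<subseteq> K"
    unfolding K_theta using less_le_trans by fastforce
  then have "card {i \<in> verts N. ereal (lam i) < smoothness N u lam delta f} \<le> card K"
    using fin(2) by (rule card_mono[rotated])
  also have "card K \<le> card S"
    using card_le_if_unique_ls_solution[OF fin(3,2)] ls ls_unique unfolding K_def by blast
  finally show ?thesis .
qed

end
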